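(* Assume Assumptions A, B, C and D hold (with constants $L_\phi,G,V,H>0$), and let $w^{(t)}$, $0\le t\le T$, be generated by Algorithm 2, where $T=\beta/\varepsilon$ for a constant $\beta>0$ (assumed to be an integer). Let $\eta^{(t)}=D\sqrt{\varepsilon}$ for some $D>0$, and $\alpha_i^{(t)}=(1+\varepsilon)^t\alpha_i^{(0)}$ with $\alpha_i^{(0)}=\frac{\alpha}{e^{\beta}L_\phi}$ for some $\alpha\in(0,\tfrac14)$. Then $$\frac1T\sum_{t=0}^{T-1}[F(w^{(t)})-F_*]\le\frac{e^{\beta}L_\phi(1+\varepsilon)}{2(1-4\alpha)\alpha\beta}\cdot\frac1n\sum_{i=1}^n\|h(w^{(0)};i)-h_i^*\|^2\cdot\varepsilon+\frac{e^{\beta}L_\phi(4\varepsilon+3)}{2\alpha(1-4\alpha)}\Big[D^2H^2+c\big(2+(V+\varepsilon^2+2)GD^2\big)^2+2+V\Big]\cdot\varepsilon.$$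
   Context: Let $n,c,d$ be positive integers and $[n]=\{1,\dots,n\}$. For each $i\in[n]$ let $h(\cdot;i):\mathbb{R}^d\to\mathbb{R}^c$ (components $h_j(\cdot;i)$, $j\in[c]$) and $\phi_i:\mathbb{R}^c\to\mathbb{R}$. Put $f(w;i)=\phi_i(h(w;i))$, $F(w)=\frac1n\sum_{i=1}^n f(w;i)$ and $F_*=\inf_{w\in\mathbb{R}^d}F(w)$. Each $\phi_i$ is assumed to attain its minimum, and $h_i^*\in\arg\min_{z}\phi_i(z)$. Vector norms are Euclidean; matrix norms are operator (spectral) norms. Assumption A: each $\phi_i$ is convex, bounded below, and $L_\phi$-smooth, i.e. $\|\nabla\phi_i(z_1)-\nabla\phi_i(z_2)\|\le L_\phi\|z_1-z_2\|$ for all $z_1,z_2$. Assumption B: each $h(\cdot;i)$ is twice continuously differentiable and there is $G>0$ with $\|\nabla_w^2 h_j(w;i)\|\le G$ for all $w\in\mathbb{R}^d$, $i\in[n]$, $j\in[c]$. Iteration setup: given a tolerance $\varepsilon>0$, step sizes $\eta^{(t)}>0$, learning rates $\alpha_i^{(t)}>0$ and iterates $w^{(t)}$, let $H_i^{(t)}\in\mathbb{R}^{c\times d}$ be the Jacobian of $h(\cdot;i)$ at $w^{(t)}$, let $\Phi^{(t)}(v)=\frac{1}{2n}\sum_{i=1}^n\|\eta^{(t)}H_i^{(t)}v-\alpha_i^{(t)}\nabla\phi_i(h(w^{(t)};i))\|^2$, $\Psi^{(t)}(v)=\Phi^{(t)}(v)+\frac{\varepsilon^2}{2}\|v\|^2$,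 and let $v_{*\mathrm{reg}}^{(t)}$ be the unique minimizer of $\Psi^{(t)}$ over $\mathbb{R}^d$. Algorithm 2: choose $w^{(0)}\in\mathbb{R}^d$; for $t=0,\dots,T-1$ let $v^{(t)}$ be any vector with $\|v^{(t)}-v_{*\mathrm{reg}}^{(t)}\|\le\varepsilon$ and set $w^{(t+1)}=w^{(t)}-\eta^{(t)}v^{(t)}$. Assumption C (constant $V>0$): for each $0\le t<T$ there exists $\hat v^{(t)}\in\mathbb{R}^d$ with $\|\hat v^{(t)}\|^2\le V$ and $\Phi^{(t)}(\hat v^{(t)})\le\varepsilon^2$. Assumption D (constant $H>0$): $\|H_i^{(t)}\|\le H/\sqrt{\varepsilon}$ for all $i\in[n]$ and $0\le t<T$. *)

theory Defs
  imports "HOL-Analysis.Analysis"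
begin

definition Fobj :: "nat \<Rightarrow> (nat \<Rightarrow> real^'c \<Rightarrow> real) \<Rightarrow> (nat \<Rightarrow> real^'d \<Rightarrow> real^'c) \<Rightarrow> real^'d \<Rightarrow> real"
  where "Fobj n phi h w = (\<Sum>i=1..n. phi i (h i w)) / real n"

definition PhiQ :: "nat \<Rightarrow> (nat \<Rightarrow> real^'d \<Rightarrow> real^'d^'c) \<Rightarrow> (nat \<Rightarrow> real^'c \<Rightarrow> real^'c)
    \<Rightarrow> (nat \<Rightarrow> real^'d \<Rightarrow> real^'c) \<Rightarrow> real \<Rightarrow> (nat \<Rightarrow> real) \<Rightarrow> real^'d \<Rightarrow> real^'d \<Rightarrow> real"
  where "PhiQ n J gphi h eta alpha w v =
     (\<Sum>i=1..n. (norm (eta *\<^sub>R (J i w *v v) - alpha i *\<^sub>R gphi i (h i w)))\<^sup>2) / (2 * real n)"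

definition PsiQ :: "nat \<Rightarrow> (nat \<Rightarrow> real^'d \<Rightarrow> real^'d^'c) \<Rightarrow> (nat \<Rightarrow> real^'c \<Rightarrow> real^'c)
    \<Rightarrow> (nat \<Rightarrow> real^'d \<Rightarrow> real^'c) \<Rightarrow> real \<Rightarrow> (nat \<Rightarrow> real) \<Rightarrow> real \<Rightarrow> real^'d \<Rightarrow> real^'d \<Rightarrow> real"
  where "PsiQ n J gphi h eta alpha eps w v = PhiQ n J gphi h eta alpha w v + eps\<^sup>2 / 2 * (norm v)\<^sup>2"

end

theory Submission
  imports Defs
begin

text \<open>
  Measure progress by the potential Y(t) = (1/n) sum_i |h(w_t; i) - h_i^*|^2 / (1+eps)^t, which
  lives in the output space of h. There, one iteration is a gradient step on each phi_i with
  learning rate alpha_i^(t), perturbed by the second-order Taylor remainder of h (Assumption B),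
  the residual of the regularized least-squares subproblem (Assumption C) and the inexactness of
  v_t (Assumption D), each of size O(eps). By convexity and L-smoothness the exact step decreases
  |z - h_i^*|^2 by 2 alpha_i^(t) (1 - alpha) (phi_i(z) - min phi_i) as long as
  alpha_i^(t) L <= alpha, which holds because (1+eps)^t <= e^beta for t <= T. Young's inequality
  with weight eps splits off the perturbation, and the factor 1+eps it costs is exactly absorbed
  by the growth of the learning rate. Hence
  2 alpha_i^(0) (1 - alpha) (F(w_t) - F_*) <= Y(t) - Y(t+1) + O(eps),
  and telescoping over T = beta/eps steps gives the bound.
\<close>

lemma has_real_derivative_along_line:
  fixes f :: "'a::real_inner \<Rightarrow> real"
  assumes "\<And>y. (f has_derivative (\<lambda>u. g y \<bullet> u)) (at y)"
  shows "((\<lambda>s. f (x + s *\<^sub>R d)) has_real_derivative (g (x + s *\<^sub>R d) \<bullet> d)) (at s)"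
proof -
  have "((\<lambda>s. x + s *\<^sub>R d) has_derivative (\<lambda>s'. s' *\<^sub>R d)) (at s)"
    by (auto intro!: derivative_eq_intros)
  from diff_chain_at[OF this assms]
  show ?thesis
    by (simp add: has_field_derivative_def o_def mult_commute_abs)
qed

lemma descent_lemma:
  fixes f :: "'a::real_inner \<Rightarrow> real"
  assumes der: "\<And>y. (f has_derivative (\<lambda>u. g y \<bullet> u)) (at y)"
    and lip: "\<And>y. norm (g y - g x) \<le> M * norm (y - x)"
  shows "f (x + d) - f x - g x \<bullet> d \<le> M / 2 * (norm d)\<^sup>2"
proof -
  define chi where "chi s = f (x + s *\<^sub>R d) - f x - s * (g x \<bullet> d) - M / 2 * s\<^sup>2 * (norm d)\<^sup>2" for s
  have "chi 1 \<le> chi 0"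
  proof (rule DERIV_nonpos_imp_nonincreasing[where f = chi])
    fix s :: real assume s: "0 \<le> s" "s \<le> 1"
    have chi_deriv: "(chi has_real_derivative (g (x + s *\<^sub>R d) - g x) \<bullet> d - M * s * (norm d)\<^sup>2) (at s)"
      unfolding chi_def
      by (rule derivative_eq_intros has_real_derivative_along_line[OF der] | simp add: inner_diff_left)+
    have "(g (x + s *\<^sub>R d) - g x) \<bullet> d \<le> norm (g (x + s *\<^sub>R d) - g x) * norm d"
      by (rule norm_cauchy_schwarz)
    also have "\<dots> \<le> M * norm (s *\<^sub>R d) * norm d"
      using lip[of "x + s *\<^sub>R d"] by (simp add: mult_right_mono)
    also have "\<dots> = M * s * (norm d)\<^sup>2"
      using s by (simp add: power2_eq_square)
    finally show "\<exists>y. (chi has_real_derivative y) (at s) \<and> y \<le> 0"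
      using chi_deriv by auto
  qed simp
  then show ?thesis by (simp add: chi_def)
qed

lemma abs_taylor_remainder_le:
  fixes f :: "'a::real_inner \<Rightarrow> real"
  assumes der: "\<And>y. (f has_derivative (\<lambda>u. g y \<bullet> u)) (at y)"
    and lip: "\<And>y. norm (g y - g x) \<le> M * norm (y - x)"
  shows "\<bar>f (x + d) - f x - g x \<bullet> d\<bar> \<le> M / 2 * (norm d)\<^sup>2"
proof -
  have "(- f) (x + d) - (- f) x - (- g) x \<bullet> d \<le> M / 2 * (norm d)\<^sup>2"
  proof (rule descent_lemma)
    show "((- f) has_derivative (\<lambda>u. (- g) y \<bullet> u)) (at y)" for y
      using has_derivative_minus[OF der[of y]] by (simp add: fun_Compl_def)
    show "norm ((- g) y - (- g) x) \<le> M * norm (y - x)" for y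
      using lip[of y] by (simp add: norm_minus_commute)
  qed
  then have "- (f (x + d) - f x - g x \<bullet> d) \<le> M / 2 * (norm d)\<^sup>2"
    by (simp add: inner_minus_left)
  with descent_lemma[OF der lip, of d] show ?thesis
    unfolding abs_le_iff by blast
qed

lemma convex_on_gradient_inequality:
  fixes f :: "'a::real_inner \<Rightarrow> real"
  assumes convex: "convex_on UNIV f"
    and der: "\<And>y. (f has_derivative (\<lambda>u. g y \<bullet> u)) (at y)"
  shows "g x \<bullet> (y - x) \<le> f y - f x"
proof -
  define psi where "psi s = f (x + s *\<^sub>R (y - x))" for s
  have "convex_on UNIV psi"
  proof (rule convex_onI)
    fix t a b :: real assume "0 < t" "t < 1"
    moreover have "x + ((1 - t) *\<^sub>R a + t *\<^sub>R b) *\<^sub>R (y - x)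
        = (1 - t) *\<^sub>R (x + a *\<^sub>R (y - x)) + t *\<^sub>R (x + b *\<^sub>R (y - x))"
      by (simp add: algebra_simps)
    ultimately show "psi ((1 - t) *\<^sub>R a + t *\<^sub>R b) \<le> (1 - t) * psi a + t * psi b"
      unfolding psi_def
      using convex_onD[OF convex, of t "x + a *\<^sub>R (y - x)" "x + b *\<^sub>R (y - x)"] by simp
  qed simp
  moreover have "(psi has_real_derivative (g x \<bullet> (y - x))) (at 0 within UNIV)"
    unfolding psi_def using has_real_derivative_along_line[OF der, of x "y - x" 0] by simp
  ultimately have "convex_on UNIV psi" "(psi has_real_derivative (g x \<bullet> (y - x))) (at 0 within UNIV)"
    by blast+
  from convex_on_imp_above_tangent[OF this(1) _ _ _ this(2), of 1]
  show ?thesis by (simp add: psi_def)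
qed

lemma norm_gradient_sq_le:
  fixes f :: "'a::real_inner \<Rightarrow> real"
  assumes der: "\<And>y. (f has_derivative (\<lambda>u. g y \<bullet> u)) (at y)"
    and lip: "\<And>y. norm (g y - g x) \<le> L * norm (y - x)"
    and L: "L > 0" and min: "\<And>y. f m \<le> f y"
  shows "(norm (g x))\<^sup>2 \<le> 2 * L * (f x - f m)"
proof -
  \<comment> \<open>one gradient step of length 1/L decreases f by at least the left-hand side over 2L\<close>
  define d where "d = - (1 / L) *\<^sub>R g x"
  define q where "q = (norm (g x))\<^sup>2"
  have "f (x + d) - f x - g x \<bullet> d \<le> L / 2 * (norm d)\<^sup>2"
    by (rule descent_lemma[OF der lip])
  moreover have "g x \<bullet> d = - q / L"
    by (simp add: d_def q_def dot_square_norm)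
  moreover have "L / 2 * (norm d)\<^sup>2 = q / L / 2"
    using L by (simp add: d_def q_def power_divide power2_eq_square)
  moreover have "f m \<le> f (x + d)" by (rule min)
  ultimately have "q / L - q / L / 2 \<le> f x - f m" by linarith
  with L show ?thesis by (simp add: q_def field_simps)
qed

lemma norm_add_sq_le_weighted:
  fixes a b :: "'a::real_inner"
  assumes e: "e > 0"
  shows "(norm (a + b))\<^sup>2 \<le> (1 + e) * (norm a)\<^sup>2 + (1 + 1 / e) * (norm b)\<^sup>2"
proof -
  have "2 * (a \<bullet> b) \<le> 2 * (norm a * norm b)"
    using norm_cauchy_schwarz[of a b] by simp
  also have "\<dots> \<le> e * (norm a)\<^sup>2 + (norm b)\<^sup>2 / e"
  proof -
    have "0 \<le> (e * norm a - norm b)\<^sup>2 / e" using e by simp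
    also have "\<dots> = e * (norm a)\<^sup>2 - 2 * (norm a * norm b) + (norm b)\<^sup>2 / e"
      using e by (simp add: power2_eq_square field_simps)
    finally show ?thesis by simp
  qed
  finally have "2 * (a \<bullet> b) \<le> e * (norm a)\<^sup>2 + (norm b)\<^sup>2 / e" .
  moreover have "(norm (a + b))\<^sup>2 = (norm a)\<^sup>2 + 2 * (a \<bullet> b) + (norm b)\<^sup>2"
    by (simp add: power2_norm_eq_inner inner_add_left inner_add_right inner_commute)
  ultimately show ?thesis by (simp add: algebra_simps)
qed

lemma norm_add3_sq_le:
  fixes a b c :: "'a::real_normed_vector"
  shows "(norm (a + b + c))\<^sup>2 \<le> 3 * ((norm a)\<^sup>2 + (norm b)\<^sup>2 + (norm c)\<^sup>2)"
proof -
  have "(norm (a + b + c))\<^sup>2 \<le> (norm a + norm b + norm c)\<^sup>2"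
    by (simp add: power_mono norm_triangle_le add_mono)
  also have "\<dots> \<le> 3 * ((norm a)\<^sup>2 + (norm b)\<^sup>2 + (norm c)\<^sup>2)"
    using sum_squares_ge_zero[of "norm a - norm b" "norm b - norm c"]
      zero_le_power2[of "norm a - norm c"]
    by (simp add: power2_eq_square algebra_simps)
  finally show ?thesis .
qed

lemma perturbed_gradient_step:
  fixes f :: "'a::real_inner \<Rightarrow> real"
  assumes convex: "convex_on UNIV f"
    and der: "\<And>y. (f has_derivative (\<lambda>u. g y \<bullet> u)) (at y)"
    and lip: "\<And>y1 y2. norm (g y1 - g y2) \<le> L * norm (y1 - y2)"
    and L: "L > 0" and min: "\<And>y. f u \<le> f y"
    and a: "a > 0" and aL: "a * L \<le> al" and e: "e > 0"
  shows "(norm (z - a *\<^sub>R g z + d - u))\<^sup>2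
    \<le> (1 + e) * ((norm (z - u))\<^sup>2 - 2 * a * (1 - al) * (f z - f u)) + (1 + 1 / e) * (norm d)\<^sup>2"
proof -
  have gap: "f z - f u \<le> g z \<bullet> (z - u)"
    using convex_on_gradient_inequality[OF convex der, of z u] by (simp add: inner_diff_right)
  have grad: "(norm (g z))\<^sup>2 \<le> 2 * L * (f z - f u)"
    by (rule norm_gradient_sq_le[OF der lip L min])
  have "(norm ((z - u) - a *\<^sub>R g z))\<^sup>2 = ((z - u) - a *\<^sub>R g z) \<bullet> ((z - u) - a *\<^sub>R g z)"
    by (rule power2_norm_eq_inner)
  also have "\<dots> = (norm (z - u))\<^sup>2 - 2 * a * (g z \<bullet> (z - u)) + a\<^sup>2 * (norm (g z))\<^sup>2"
    by (simp add: inner_diff_left inner_diff_right inner_commute power2_norm_eq_inner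
        algebra_simps) (simp add: power2_eq_square)
  also have "\<dots> \<le> (norm (z - u))\<^sup>2 - 2 * a * (f z - f u) + 2 * a * (a * L) * (f z - f u)"
    using mult_left_mono[OF gap, of "2 * a"] mult_left_mono[OF grad, of "a\<^sup>2"] a
    by (simp add: power2_eq_square algebra_simps)
  also have "\<dots> \<le> (norm (z - u))\<^sup>2 - 2 * a * (1 - al) * (f z - f u)"
    using mult_left_mono[OF aL, of "2 * a * (f z - f u)"] a min[of z]
    by (simp add: algebra_simps)
  finally have descent: "(norm ((z - u) - a *\<^sub>R g z))\<^sup>2 \<le> \<dots>" .
  have "(norm (z - a *\<^sub>R g z + d - u))\<^sup>2 \<le> (1 + e) * (norm ((z - u) - a *\<^sub>R g z))\<^sup>2 + (1 + 1 / e) * (norm d)\<^sup>2"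
    using norm_add_sq_le_weighted[OF e, of "(z - u) - a *\<^sub>R g z" d] by (simp add: algebra_simps)
  also have "\<dots> \<le> (1 + e) * ((norm (z - u))\<^sup>2 - 2 * a * (1 - al) * (f z - f u)) + (1 + 1 / e) * (norm d)\<^sup>2"
    using mult_left_mono[OF descent, of "1 + e"] e by simp
  finally show ?thesis .
qed

lemma has_derivative_matrix_row:
  fixes h :: "real^'d \<Rightarrow> real^'c" and A :: "real^'d^'c"
  assumes "(h has_derivative (\<lambda>u. A *v u)) (at y)"
  shows "((\<lambda>y. h y $ j) has_derivative (\<lambda>u. A $ j \<bullet> u)) (at y)"
proof -
  have "(\<lambda>u. (A *v u) $ j) = (\<lambda>u. A $ j \<bullet> u)"
    by (auto simp: fun_eq_iff matrix_vector_mult_def inner_vec_def)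
  with bounded_linear.has_derivative[OF bounded_linear_vec_nth assms, of j] show ?thesis
    by simp
qed

lemma norm_taylor_remainder_sq_le:
  fixes h :: "real^'d \<Rightarrow> real^'c" and J :: "real^'d \<Rightarrow> real^'d^'c"
    and Hs :: "'c \<Rightarrow> real^'d \<Rightarrow> real^'d^'d"
  assumes jac: "\<And>x. (h has_derivative (\<lambda>u. J x *v u)) (at x)"
    and hess: "\<And>j x. ((\<lambda>y. J y $ j) has_derivative (\<lambda>u. Hs j x *v u)) (at x)"
    and hess_bound: "\<And>j x. onorm (\<lambda>u. Hs j x *v u) \<le> G"
  shows "(norm (h (x + d) - h x - J x *v d))\<^sup>2 \<le> real CARD('c) * (G / 2 * (norm d)\<^sup>2)\<^sup>2"
proof -
  define r where "r = h (x + d) - h x - J x *v d"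
  have "\<bar>r $ j\<bar> \<le> G / 2 * (norm d)\<^sup>2" for j
  proof -
    have "norm (J y $ j - J x $ j) \<le> G * norm (y - x)" for y
      by (rule differentiable_bound[of UNIV "\<lambda>y. J y $ j" "\<lambda>x u. Hs j x *v u"])
        (use hess hess_bound in auto)
    from abs_taylor_remainder_le[OF has_derivative_matrix_row[OF jac] this]
    show ?thesis
      by (simp add: r_def matrix_vector_mult_def inner_vec_def)
  qed
  then have "(r $ j)\<^sup>2 \<le> (G / 2 * (norm d)\<^sup>2)\<^sup>2" for j
    by (metis abs_ge_zero power2_abs power_mono)
  then have "(\<Sum>j\<in>UNIV. (r $ j)\<^sup>2) \<le> real CARD('c) * (G / 2 * (norm d)\<^sup>2)\<^sup>2"
    using sum_mono[of UNIV "\<lambda>j. (r $ j)\<^sup>2" "\<lambda>_. (G / 2 * (norm d)\<^sup>2)\<^sup>2"] by simp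
  moreover have "(norm r)\<^sup>2 = (\<Sum>j\<in>UNIV. (r $ j)\<^sup>2)"
    unfolding power2_norm_eq_inner inner_vec_def by (simp add: power2_eq_square)
  ultimately show ?thesis
    by (simp add: r_def)
qed

lemma regularized_minimizer_bounds:
  fixes Phi :: "'a::real_normed_vector \<Rightarrow> real"
  assumes min: "Phi vr + e\<^sup>2 / 2 * (norm vr)\<^sup>2 \<le> Phi vh + e\<^sup>2 / 2 * (norm vh)\<^sup>2"
    and vh: "(norm vh)\<^sup>2 \<le> V" "Phi vh \<le> e\<^sup>2"
    and nonneg: "Phi vr \<ge> 0" and e: "e > 0"
  shows "Phi vr \<le> e\<^sup>2 / 2 * (2 + V)" and "(norm vr)\<^sup>2 \<le> 2 + V"
proof -
  have bound: "Phi vr + e\<^sup>2 / 2 * (norm vr)\<^sup>2 \<le> e\<^sup>2 / 2 * (2 + V)"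
    using min vh(2) mult_left_mono[OF vh(1), of "e\<^sup>2 / 2"] by (simp add: algebra_simps)
  moreover have "0 \<le> e\<^sup>2 / 2 * (norm vr)\<^sup>2"
    by simp
  ultimately show "Phi vr \<le> e\<^sup>2 / 2 * (2 + V)"
    by linarith
  from bound nonneg have "e\<^sup>2 / 2 * (norm vr)\<^sup>2 \<le> e\<^sup>2 / 2 * (2 + V)" by linarith
  with e show "(norm vr)\<^sup>2 \<le> 2 + V" by simp
qed

lemma average_le_of_potential_decrease:
  fixes Y gap :: "nat \<Rightarrow> real"
  assumes decrease: "\<And>t. t < T \<Longrightarrow> c * gap t \<le> Y t - Y (Suc t) + \<delta>"
    and "Y T \<ge> 0" and "c > 0" and "T > 0"
  shows "(\<Sum>t<T. gap t) / T \<le> Y 0 / (c * T) + \<delta> / c"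
proof -
  have "c * (\<Sum>t<T. gap t) \<le> (\<Sum>t<T. Y t - Y (Suc t) + \<delta>)"
    unfolding sum_distrib_left by (rule sum_mono) (simp add: decrease)
  also have "\<dots> = Y 0 - Y T + T * \<delta>"
    by (simp add: sum.distrib sum_lessThan_telescope')
  finally show ?thesis
    using assms(2-4) by (simp add: field_simps)
qed

lemma gap_constants_le:
  fixes alpha beta L eps P K :: real and T :: nat
  assumes alpha: "0 < alpha" "alpha < 1/4" and L: "L > 0" and beta: "beta > 0" and eps: "eps > 0"
    and T: "real T = beta / eps" and P: "P \<ge> 0" and K: "K \<ge> 0"
  defines "c \<equiv> 2 * (alpha / (exp beta * L)) * (1 - alpha)"
  shows "P / (c * real T) + 3 * eps * K / c
    \<le> exp beta * L * (1 + eps) / (2 * (1 - 4 * alpha) * alpha * beta) * P * eps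
      + exp beta * L * (4 * eps + 3) / (2 * alpha * (1 - 4 * alpha)) * K * eps"
proof (rule add_mono)
  have loosen: "x / (1 - alpha) \<le> y / (1 - 4 * alpha)" if "0 \<le> x" "x \<le> y" for x y
  proof -
    have "x / (1 - alpha) \<le> x / (1 - 4 * alpha)"
      using that alpha by (intro divide_left_mono) auto
    also have "\<dots> \<le> y / (1 - 4 * alpha)"
      using that alpha by (intro divide_right_mono) auto
    finally show ?thesis .
  qed
  define C1 where "C1 = exp beta * L * P * eps / (2 * alpha * beta)"
  have "P / (c * real T) = C1 * (1 / (1 - alpha))"
    using alpha L beta eps unfolding C1_def c_def T by (simp add: field_simps)
  also have "\<dots> \<le> C1 * ((1 + eps) / (1 - 4 * alpha))"
    using loosen[of 1 "1 + eps"] eps P alpha L beta unfolding C1_def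
    by (intro mult_left_mono) auto
  finally show "P / (c * real T) \<le> exp beta * L * (1 + eps) / (2 * (1 - 4 * alpha) * alpha * beta) * P * eps"
    by (simp add: C1_def field_simps)
  define C2 where "C2 = exp beta * L * eps * K / (2 * alpha)"
  have "3 * eps * K / c = C2 * (3 / (1 - alpha))"
    using alpha L unfolding C2_def c_def by (simp add: field_simps)
  also have "\<dots> \<le> C2 * ((4 * eps + 3) / (1 - 4 * alpha))"
    using loosen[of 3 "4 * eps + 3"] eps K alpha L unfolding C2_def
    by (intro mult_left_mono) auto
  finally show "3 * eps * K / c \<le> exp beta * L * (4 * eps + 3) / (2 * alpha * (1 - 4 * alpha)) * K * eps"
    by (simp add: C2_def field_simps)
qed

locale gauss_newton_run =
  fixes n :: nat
    and h :: "nat \<Rightarrow> real^'d \<Rightarrow> real^'c"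
    and J :: "nat \<Rightarrow> real^'d \<Rightarrow> real^'d^'c"
    and Hs :: "nat \<Rightarrow> 'c \<Rightarrow> real^'d \<Rightarrow> real^'d^'d"
    and phi :: "nat \<Rightarrow> real^'c \<Rightarrow> real"
    and gphi :: "nat \<Rightarrow> real^'c \<Rightarrow> real^'c"
    and hstar :: "nat \<Rightarrow> real^'c"
    and L G V H eps beta D alpha :: real
    and T :: nat
    and w v vreg :: "nat \<Rightarrow> real^'d"
  assumes n_pos: "n \<ge> 1"
    and L_pos: "L > 0"
    and phi_convex: "\<And>i. i \<in> {1..n} \<Longrightarrow> convex_on UNIV (phi i)"
    and phi_grad: "\<And>i z. i \<in> {1..n} \<Longrightarrow> (phi i has_derivative (\<lambda>u. gphi i z \<bullet> u)) (at z)"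
    and phi_smooth: "\<And>i z1 z2. i \<in> {1..n} \<Longrightarrow> norm (gphi i z1 - gphi i z2) \<le> L * norm (z1 - z2)"
    and hstar_min: "\<And>i z. i \<in> {1..n} \<Longrightarrow> phi i (hstar i) \<le> phi i z"
    and G_pos: "G > 0"
    and h_jac: "\<And>i x. i \<in> {1..n} \<Longrightarrow> (h i has_derivative (\<lambda>u. J i x *v u)) (at x)"
    and h_hess: "\<And>i j x. i \<in> {1..n} \<Longrightarrow> ((\<lambda>y. J i y $ j) has_derivative (\<lambda>u. Hs i j x *v u)) (at x)"
    and h_hess_bd: "\<And>i j x. i \<in> {1..n} \<Longrightarrow> onorm (\<lambda>u. Hs i j x *v u) \<le> G"
    and eps_pos: "eps > 0"
    and beta_pos: "beta > 0"
    and T_def: "real T = beta / eps"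
    and D_pos: "D > 0"
    and alpha_pos: "0 < alpha" and alpha_lt: "alpha < 1/4"
    and vreg_minimizes: "\<And>t u. t < T \<Longrightarrow>
        PsiQ n J gphi h (D * sqrt eps) (\<lambda>i. (1 + eps) ^ t * (alpha / (exp beta * L))) eps (w t) (vreg t)
        \<le> PsiQ n J gphi h (D * sqrt eps) (\<lambda>i. (1 + eps) ^ t * (alpha / (exp beta * L))) eps (w t) u"
    and v_close: "\<And>t. t < T \<Longrightarrow> norm (v t - vreg t) \<le> eps"
    and w_step: "\<And>t. t < T \<Longrightarrow> w (Suc t) = w t - (D * sqrt eps) *\<^sub>R v t"
    and V_pos: "V > 0"
    and good_direction_exists: "\<And>t. t < T \<Longrightarrow> \<exists>vh. (norm vh)\<^sup>2 \<le> V \<and>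
        PhiQ n J gphi h (D * sqrt eps) (\<lambda>i. (1 + eps) ^ t * (alpha / (exp beta * L))) (w t) vh \<le> eps\<^sup>2"
    and jacobian_norm_le: "\<And>i t. i \<in> {1..n} \<Longrightarrow> t < T \<Longrightarrow> onorm (\<lambda>u. J i (w t) *v u) \<le> H / sqrt eps"
begin

abbreviation eta :: real where "eta \<equiv> D * sqrt eps"
abbreviation lr0 :: real where "lr0 \<equiv> alpha / (exp beta * L)"
abbreviation lr :: "nat \<Rightarrow> real" where "lr t \<equiv> (1 + eps) ^ t * lr0"
abbreviation step_growth :: real where "step_growth \<equiv> (V + eps\<^sup>2 + 2) * G * D\<^sup>2"

definition residual :: "nat \<Rightarrow> nat \<Rightarrow> real^'c"
  where "residual t i = eta *\<^sub>R (J i (w t) *v vreg t) - lr t *\<^sub>R gphi i (h i (w t))"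

definition perturbation :: "nat \<Rightarrow> nat \<Rightarrow> real^'c"
  where "perturbation t i = h i (w (Suc t)) - (h i (w t) - lr t *\<^sub>R gphi i (h i (w t)))"

definition potential :: "nat \<Rightarrow> real"
  where "potential t = (\<Sum>i=1..n. (norm (h i (w t) - hstar i))\<^sup>2) / real n / (1 + eps) ^ t"

lemma potential_nonneg: "potential t \<ge> 0"
  unfolding potential_def using eps_pos by (intro divide_nonneg_nonneg sum_nonneg) auto

lemma lr_pos: "lr t > 0"
  using alpha_pos L_pos eps_pos by simp

lemma lr_mult_L_le:
  assumes "t \<le> T"
  shows "lr t * L \<le> alpha"
proof -
  have "(1 + eps) ^ t \<le> exp eps ^ t"
    using eps_pos by (intro power_mono) (auto simp: add.commute exp_ge_add_one_self)
  also have "\<dots> \<le> exp (real T * eps)"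
    using assms eps_pos by (simp add: exp_of_nat_mult[symmetric] mult_right_mono)
  also have "real T * eps = beta"
    using T_def eps_pos by simp
  finally show ?thesis
    using L_pos alpha_pos by (simp add: field_simps)
qed

lemma vreg_bounds:
  assumes t: "t < T"
  shows "PhiQ n J gphi h eta (\<lambda>i. lr t) (w t) (vreg t) \<le> eps\<^sup>2 / 2 * (2 + V)"
    and "(norm (vreg t))\<^sup>2 \<le> 2 + V"
proof -
  obtain vh where "(norm vh)\<^sup>2 \<le> V" "PhiQ n J gphi h eta (\<lambda>i. lr t) (w t) vh \<le> eps\<^sup>2"
    using good_direction_exists[OF t] by blast
  moreover have "PhiQ n J gphi h eta (\<lambda>i. lr t) (w t) (vreg t) \<ge> 0"
    unfolding PhiQ_def by (intro divide_nonneg_nonneg sum_nonneg) auto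
  ultimately show "PhiQ n J gphi h eta (\<lambda>i. lr t) (w t) (vreg t) \<le> eps\<^sup>2 / 2 * (2 + V)"
    and "(norm (vreg t))\<^sup>2 \<le> 2 + V"
    using regularized_minimizer_bounds[OF vreg_minimizes[OF t, of vh, unfolded PsiQ_def] _ _ _ eps_pos]
    by blast+
qed

lemma mean_residual_sq_le:
  assumes "t < T"
  shows "(\<Sum>i=1..n. (norm (residual t i))\<^sup>2) / real n \<le> eps\<^sup>2 * (2 + V)"
  using vreg_bounds(1)[OF assms] by (simp add: PhiQ_def residual_def field_simps)

lemma norm_v_sq_le:
  assumes t: "t < T"
  shows "(norm (v t))\<^sup>2 \<le> 2 * (2 + V + eps\<^sup>2)"
proof -
  have "norm (v t) \<le> norm (vreg t) + eps"
    using norm_triangle_sub[of "v t" "vreg t"] v_close[OF t] by simp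
  then have "(norm (v t))\<^sup>2 \<le> (norm (vreg t) + eps)\<^sup>2"
    by (simp add: power_mono)
  also have "\<dots> \<le> 2 * (norm (vreg t))\<^sup>2 + 2 * eps\<^sup>2"
    using zero_le_power2[of "norm (vreg t) - eps"] by (simp add: power2_eq_square algebra_simps)
  finally show ?thesis
    using vreg_bounds(2)[OF t] by simp
qed

lemma perturbation_eq:
  assumes "t < T"
  shows "perturbation t i
    = (h i (w (Suc t)) - h i (w t) - J i (w t) *v (w (Suc t) - w t))
      - residual t i - eta *\<^sub>R (J i (w t) *v (v t - vreg t))"
proof -
  have "w (Suc t) - w t = (- eta) *\<^sub>R v t"
    using w_step[OF assms] by simp
  then have jac_step: "J i (w t) *v (w (Suc t) - w t) = (- eta) *\<^sub>R (J i (w t) *v v t)"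
    by (simp only: matrix_vector_mult_scaleR)
  show ?thesis
    unfolding perturbation_def residual_def jac_step
    by (simp add: matrix_vector_mult_diff_distrib scaleR_diff_right algebra_simps)
qed

lemma norm_step_sq_eq:
  assumes "t < T"
  shows "(norm (w (Suc t) - w t))\<^sup>2 = D\<^sup>2 * eps * (norm (v t))\<^sup>2"
  using w_step[OF assms] D_pos eps_pos by (simp add: power_mult_distrib)

lemma norm_taylor_step_sq_le:
  assumes i: "i \<in> {1..n}" and t: "t < T"
  shows "(norm (h i (w (Suc t)) - h i (w t) - J i (w t) *v (w (Suc t) - w t)))\<^sup>2
    \<le> real CARD('c) * (eps * step_growth)\<^sup>2"
proof -
  have "(norm (h i (w (Suc t)) - h i (w t) - J i (w t) *v (w (Suc t) - w t)))\<^sup>2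
      \<le> real CARD('c) * (G / 2 * (norm (w (Suc t) - w t))\<^sup>2)\<^sup>2"
    using norm_taylor_remainder_sq_le[OF h_jac[OF i] h_hess[OF i] h_hess_bd[OF i],
        of "w t" "w (Suc t) - w t"]
    by simp
  also have "\<dots> \<le> real CARD('c) * (eps * step_growth)\<^sup>2"
  proof (intro mult_left_mono power_mono)
    have "G / 2 * (norm (w (Suc t) - w t))\<^sup>2 = G / 2 * D\<^sup>2 * eps * (norm (v t))\<^sup>2"
      by (simp add: norm_step_sq_eq[OF t])
    also have "\<dots> \<le> G / 2 * D\<^sup>2 * eps * (2 * (2 + V + eps\<^sup>2))"
      using norm_v_sq_le[OF t] G_pos eps_pos by (intro mult_left_mono) auto
    finally show "G / 2 * (norm (w (Suc t) - w t))\<^sup>2 \<le> eps * step_growth"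
      by (simp add: algebra_simps)
  qed (use G_pos in auto)
  finally show ?thesis .
qed

lemma norm_jacobian_correction_le:
  assumes i: "i \<in> {1..n}" and t: "t < T"
  shows "norm (eta *\<^sub>R (J i (w t) *v (v t - vreg t))) \<le> D * H * eps"
proof -
  have "norm (J i (w t) *v (v t - vreg t)) \<le> onorm (\<lambda>u. J i (w t) *v u) * norm (v t - vreg t)"
    by (rule onorm[OF matrix_vector_mul_bounded_linear])
  also have "\<dots> \<le> H / sqrt eps * eps"
    using jacobian_norm_le[OF i t] v_close[OF t] onorm_pos_le[OF matrix_vector_mul_bounded_linear]
      order_trans[OF onorm_pos_le[OF matrix_vector_mul_bounded_linear] jacobian_norm_le[OF i t]]
    by (intro mult_mono) simp_all
  finally have "eta * norm (J i (w t) *v (v t - vreg t)) \<le> eta * (H / sqrt eps * eps)"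
    using D_pos eps_pos by (intro mult_left_mono) auto
  with D_pos eps_pos show ?thesis
    by simp
qed

lemma norm_perturbation_sq_le:
  assumes i: "i \<in> {1..n}" and t: "t < T"
  shows "(norm (perturbation t i))\<^sup>2
    \<le> 3 * (real CARD('c) * (eps * step_growth)\<^sup>2 + (norm (residual t i))\<^sup>2 + (D * H * eps)\<^sup>2)"
proof -
  have "(norm (eta *\<^sub>R (J i (w t) *v (v t - vreg t))))\<^sup>2 \<le> (D * H * eps)\<^sup>2"
    by (intro power_mono norm_jacobian_correction_le[OF i t]) simp
  with norm_add3_sq_le[of "h i (w (Suc t)) - h i (w t) - J i (w t) *v (w (Suc t) - w t)"
      "- residual t i" "- eta *\<^sub>R (J i (w t) *v (v t - vreg t))"]
    norm_taylor_step_sq_le[OF i t]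
  show ?thesis
    unfolding perturbation_eq[OF t] by simp
qed

lemma mean_perturbation_sq_le:
  assumes t: "t < T"
  shows "(\<Sum>i=1..n. (norm (perturbation t i))\<^sup>2) / real n
    \<le> 3 * eps\<^sup>2 * (D\<^sup>2 * H\<^sup>2 + real CARD('c) * (2 + step_growth)\<^sup>2 + 2 + V)"
proof -
  define B where "B = real CARD('c) * (eps * step_growth)\<^sup>2 + (D * H * eps)\<^sup>2"
  have "(\<Sum>i=1..n. (norm (perturbation t i))\<^sup>2) \<le> (\<Sum>i=1..n. 3 * B + 3 * (norm (residual t i))\<^sup>2)"
    using norm_perturbation_sq_le[OF _ t] by (intro sum_mono) (simp add: B_def algebra_simps)
  also have "\<dots> = real n * (3 * B) + 3 * (\<Sum>i=1..n. (norm (residual t i))\<^sup>2)"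
    by (simp add: sum.distrib sum_distrib_left)
  finally have "(\<Sum>i=1..n. (norm (perturbation t i))\<^sup>2) / real n
      \<le> 3 * B + 3 * ((\<Sum>i=1..n. (norm (residual t i))\<^sup>2) / real n)"
    using n_pos by (simp add: field_simps)
  also have "\<dots> \<le> 3 * B + 3 * (eps\<^sup>2 * (2 + V))"
    using mean_residual_sq_le[OF t] by simp
  also have "\<dots> \<le> 3 * eps\<^sup>2 * (D\<^sup>2 * H\<^sup>2 + real CARD('c) * (2 + step_growth)\<^sup>2 + 2 + V)"
  proof -
    have "3 * (k * (e * x)\<^sup>2 + (d * h * e)\<^sup>2) + 3 * (e\<^sup>2 * (2 + v))
        \<le> 3 * e\<^sup>2 * (d\<^sup>2 * h\<^sup>2 + k * (2 + x)\<^sup>2 + 2 + v)" if "x \<ge> 0" "k \<ge> 0" for k e x d h v :: real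
    proof -
      from that have "e\<^sup>2 * (k * x\<^sup>2) \<le> e\<^sup>2 * (k * (2 + x)\<^sup>2)"
        by (intro mult_left_mono power_mono) auto
      then show ?thesis
        by (simp add: power_mult_distrib algebra_simps)
    qed
    with V_pos G_pos show ?thesis
      unfolding B_def by simp
  qed
  finally show ?thesis .
qed

lemma potential_component_decrease:
  assumes i: "i \<in> {1..n}" and t: "t < T"
  shows "(norm (h i (w (Suc t)) - hstar i))\<^sup>2 / (1 + eps) ^ Suc t
    \<le> (norm (h i (w t) - hstar i))\<^sup>2 / (1 + eps) ^ t
      - 2 * lr0 * (1 - alpha) * (phi i (h i (w t)) - phi i (hstar i))
      + (norm (perturbation t i))\<^sup>2 / eps"
proof -
  define p where "p = (1 + eps) ^ t"
  define A where "A = (norm (h i (w t) - hstar i))\<^sup>2"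
  define B where "B = phi i (h i (w t)) - phi i (hstar i)"
  define Q where "Q = (norm (perturbation t i))\<^sup>2"
  have p: "p \<ge> 1"
    using eps_pos by (simp add: p_def)
  have step: "h i (w (Suc t)) = h i (w t) - lr t *\<^sub>R gphi i (h i (w t)) + perturbation t i"
    by (simp add: perturbation_def)
  have "(norm (h i (w (Suc t)) - hstar i))\<^sup>2
      \<le> (1 + eps) * (A - 2 * (p * lr0) * (1 - alpha) * B) + (1 + 1 / eps) * Q"
    unfolding step A_def B_def Q_def p_def
    by (rule perturbed_gradient_step[OF phi_convex[OF i] phi_grad[OF i] phi_smooth[OF i] L_pos
          hstar_min[OF i] lr_pos lr_mult_L_le[OF less_imp_le[OF t]] eps_pos])
  then have "(norm (h i (w (Suc t)) - hstar i))\<^sup>2 / ((1 + eps) * p)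
      \<le> ((1 + eps) * (A - 2 * (p * lr0) * (1 - alpha) * B) + (1 + 1 / eps) * Q) / ((1 + eps) * p)"
    using eps_pos p by (intro divide_right_mono) auto
  also have "\<dots> = A / p - 2 * lr0 * (1 - alpha) * B + Q / eps / p"
  proof -
    have "((1 + e) * (X - 2 * (p * r) * k * B) + (1 + 1 / e) * Q) / ((1 + e) * p)
        = X / p - 2 * r * k * B + Q / e / p" if "e > 0" for e r k X :: real
    proof -
      have "(1 + 1 / e) * Q = (1 + e) * (Q / e)"
        using that by (simp add: field_simps)
      then have "(1 + e) * (X - 2 * (p * r) * k * B) + (1 + 1 / e) * Q
          = (1 + e) * (X - 2 * (p * r) * k * B + Q / e)"
        by (simp add: algebra_simps)
      with that p show ?thesis
        by (simp add: add_divide_distrib diff_divide_distrib)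
    qed
    from this[OF eps_pos] show ?thesis .
  qed
  also have "Q / eps / p \<le> Q / eps"
    using eps_pos p by (simp add: Q_def divide_le_eq mult_le_cancel_left1)
  finally show ?thesis
    by (simp add: A_def B_def Q_def p_def mult.commute)
qed

lemma Fobj_Inf_ge:
  "(\<Sum>i=1..n. phi i (hstar i)) / real n \<le> (INF x. Fobj n phi h x)"
  unfolding Fobj_def by (rule cINF_greatest) (auto intro!: divide_right_mono sum_mono hstar_min)

lemma potential_decrease:
  assumes t: "t < T"
  shows "2 * lr0 * (1 - alpha) * (Fobj n phi h (w t) - (INF x. Fobj n phi h x))
    \<le> potential t - potential (Suc t)
      + 3 * eps * (D\<^sup>2 * H\<^sup>2 + real CARD('c) * (2 + step_growth)\<^sup>2 + 2 + V)"
proof -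
  define c where "c = 2 * lr0 * (1 - alpha)"
  have c: "c \<ge> 0"
    using alpha_pos alpha_lt L_pos by (simp add: c_def)
  have "potential (Suc t) = (\<Sum>i=1..n. (norm (h i (w (Suc t)) - hstar i))\<^sup>2 / (1 + eps) ^ Suc t) / real n"
    by (simp add: potential_def sum_divide_distrib mult_ac)
  also have "\<dots> \<le> (\<Sum>i=1..n. (norm (h i (w t) - hstar i))\<^sup>2 / (1 + eps) ^ t
      - c * (phi i (h i (w t)) - phi i (hstar i)) + (norm (perturbation t i))\<^sup>2 / eps) / real n"
    unfolding c_def using n_pos potential_component_decrease[OF _ t]
    by (intro divide_right_mono sum_mono) auto
  also have "\<dots> = potential t - c * (Fobj n phi h (w t) - (\<Sum>i=1..n. phi i (hstar i)) / real n)
      + (\<Sum>i=1..n. (norm (perturbation t i))\<^sup>2) / real n / eps"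
    using n_pos
    by (simp add: potential_def Fobj_def sum.distrib sum_subtractf sum_divide_distrib[symmetric]
        sum_distrib_left[symmetric] field_simps)
  also have "\<dots> \<le> potential t - c * (Fobj n phi h (w t) - (INF x. Fobj n phi h x))
      + 3 * eps * (D\<^sup>2 * H\<^sup>2 + real CARD('c) * (2 + step_growth)\<^sup>2 + 2 + V)"
  proof -
    have "(\<Sum>i=1..n. (norm (perturbation t i))\<^sup>2) / real n / eps
        \<le> 3 * eps\<^sup>2 * (D\<^sup>2 * H\<^sup>2 + real CARD('c) * (2 + step_growth)\<^sup>2 + 2 + V) / eps"
      using mean_perturbation_sq_le[OF t] eps_pos by (intro divide_right_mono) auto
    moreover have "c * (Fobj n phi h (w t) - (INF x. Fobj n phi h x))
        \<le> c * (Fobj n phi h (w t) - (\<Sum>i=1..n. phi i (hstar i)) / real n)"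
      using Fobj_Inf_ge c by (intro mult_left_mono) auto
    ultimately show ?thesis
      using eps_pos by (simp add: power2_eq_square)
  qed
  finally show ?thesis
    by (simp add: c_def)
qed

lemma average_gap_le:
  "(\<Sum>t<T. Fobj n phi h (w t) - (INF x. Fobj n phi h x)) / real T
    \<le> exp beta * L * (1 + eps) / (2 * (1 - 4 * alpha) * alpha * beta)
        * ((\<Sum>i=1..n. (norm (h i (w 0) - hstar i))\<^sup>2) / real n) * eps
      + exp beta * L * (4 * eps + 3) / (2 * alpha * (1 - 4 * alpha))
        * (D\<^sup>2 * H\<^sup>2 + real CARD('c) * (2 + step_growth)\<^sup>2 + 2 + V) * eps"
proof -
  have "real T > 0"
    using T_def beta_pos eps_pos by simp
  then have "T > 0"
    by simp
  moreover have "potential T \<ge> 0"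
    by (rule potential_nonneg)
  moreover have "2 * lr0 * (1 - alpha) > 0"
    using alpha_pos alpha_lt L_pos by simp
  ultimately have average: "(\<Sum>t<T. Fobj n phi h (w t) - (INF x. Fobj n phi h x)) / real T
      \<le> potential 0 / (2 * lr0 * (1 - alpha) * real T)
        + 3 * eps * (D\<^sup>2 * H\<^sup>2 + real CARD('c) * (2 + step_growth)\<^sup>2 + 2 + V) / (2 * lr0 * (1 - alpha))"
    by (intro average_le_of_potential_decrease potential_decrease)
  have "potential 0 = (\<Sum>i=1..n. (norm (h i (w 0) - hstar i))\<^sup>2) / real n"
    by (simp add: potential_def)
  moreover have "potential 0 \<ge> 0"
    by (rule potential_nonneg)
  moreover have "D\<^sup>2 * H\<^sup>2 + real CARD('c) * (2 + step_growth)\<^sup>2 + 2 + V \<ge> 0"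
    using V_pos by simp
  ultimately show ?thesis
    using order_trans[OF average gap_constants_le[OF alpha_pos alpha_lt L_pos beta_pos eps_pos T_def]]
    by simp
qed

end

theorem theorem2:
  fixes n :: nat
    and h :: "nat \<Rightarrow> real^'d \<Rightarrow> real^'c"
    and J :: "nat \<Rightarrow> real^'d \<Rightarrow> real^'d^'c"
    and Hs :: "nat \<Rightarrow> 'c \<Rightarrow> real^'d \<Rightarrow> real^'d^'d"
    and phi :: "nat \<Rightarrow> real^'c \<Rightarrow> real"
    and gphi :: "nat \<Rightarrow> real^'c \<Rightarrow> real^'c"
    and hstar :: "nat \<Rightarrow> real^'c"
    and L G V H eps beta D alpha :: real
    and T :: nat
    and w v vreg :: "nat \<Rightarrow> real^'d"
  assumes n_pos: "n \<ge> 1"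
    \<comment> \<open>Assumption A: convex, bounded below, L-smooth (gradient gphi, L-Lipschitz)\<close>
    and L_pos: "L > 0"
    and phi_convex: "\<And>i. i \<in> {1..n} \<Longrightarrow> convex_on UNIV (phi i)"
    and phi_bdd: "\<And>i. i \<in> {1..n} \<Longrightarrow> bdd_below (range (phi i))"
    and phi_grad: "\<And>i z. i \<in> {1..n} \<Longrightarrow> (phi i has_derivative (\<lambda>u. gphi i z \<bullet> u)) (at z)"
    and phi_smooth: "\<And>i z1 z2. i \<in> {1..n} \<Longrightarrow> norm (gphi i z1 - gphi i z2) \<le> L * norm (z1 - z2)"
    \<comment> \<open>each phi_i attains its minimum at hstar i\<close>
    and hstar_min: "\<And>i z. i \<in> {1..n} \<Longrightarrow> phi i (hstar i) \<le> phi i z"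
    \<comment> \<open>Assumption B: h(.;i) is C^2 with Jacobian J and component Hessians Hs bounded by G\<close>
    and G_pos: "G > 0"
    and h_jac: "\<And>i x. i \<in> {1..n} \<Longrightarrow> (h i has_derivative (\<lambda>u. J i x *v u)) (at x)"
    and h_hess: "\<And>i j x. i \<in> {1..n} \<Longrightarrow> ((\<lambda>y. J i y $ j) has_derivative (\<lambda>u. Hs i j x *v u)) (at x)"
    and h_hess_cont: "\<And>i j. i \<in> {1..n} \<Longrightarrow> continuous_on UNIV (Hs i j)"
    and h_hess_bd: "\<And>i j x. i \<in> {1..n} \<Longrightarrow> onorm (\<lambda>u. Hs i j x *v u) \<le> G"
    \<comment> \<open>parameters\<close>
    and eps_pos: "eps > 0"
    and beta_pos: "beta > 0"
    and T_def: "real T = beta / eps"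
    and D_pos: "D > 0"
    and alpha_pos: "0 < alpha" and alpha_lt: "alpha < 1/4"
    \<comment> \<open>Algorithm 2 with eta^(t) = D sqrt eps, alpha_i^(t) = (1+eps)^t alpha / (e^beta L)\<close>
    and vreg_min: "\<And>t u. t < T \<Longrightarrow>
        PsiQ n J gphi h (D * sqrt eps) (\<lambda>i. (1 + eps) ^ t * (alpha / (exp beta * L))) eps (w t) (vreg t)
        \<le> PsiQ n J gphi h (D * sqrt eps) (\<lambda>i. (1 + eps) ^ t * (alpha / (exp beta * L))) eps (w t) u"
    and v_close: "\<And>t. t < T \<Longrightarrow> norm (v t - vreg t) \<le> eps"
    and w_step: "\<And>t. t < T \<Longrightarrow> w (Suc t) = w t - (D * sqrt eps) *\<^sub>R v t"
    \<comment> \<open>Assumption C\<close>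
    and V_pos: "V > 0"
    and assmC: "\<And>t. t < T \<Longrightarrow> \<exists>vh. (norm vh)\<^sup>2 \<le> V \<and>
        PhiQ n J gphi h (D * sqrt eps) (\<lambda>i. (1 + eps) ^ t * (alpha / (exp beta * L))) (w t) vh \<le> eps\<^sup>2"
    \<comment> \<open>Assumption D\<close>
    and H_pos: "H > 0"
    and assmD: "\<And>i t. i \<in> {1..n} \<Longrightarrow> t < T \<Longrightarrow> onorm (\<lambda>u. J i (w t) *v u) \<le> H / sqrt eps"
  shows "(\<Sum>t<T. Fobj n phi h (w t) - (INF x. Fobj n phi h x)) / real T
    \<le> exp beta * L * (1 + eps) / (2 * (1 - 4 * alpha) * alpha * beta)
        * ((\<Sum>i=1..n. (norm (h i (w 0) - hstar i))\<^sup>2) / real n) * eps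
      + exp beta * L * (4 * eps + 3) / (2 * alpha * (1 - 4 * alpha))
        * (D\<^sup>2 * H\<^sup>2 + real CARD('c) * (2 + (V + eps\<^sup>2 + 2) * G * D\<^sup>2)\<^sup>2 + 2 + V) * eps"
proof -
  interpret gauss_newton_run n h J Hs phi gphi hstar L G V H eps beta D alpha T w v vreg
    by unfold_locales (fact assms)+
  show ?thesis
    by (rule average_gap_le)
qed

end
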